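(* Let $(\vec U_i)_{i\in\mathbb{Z}}$ be a strictly stationary sequence of $d$-dimensional random vectors with c.d.f. $C$ (a copula), whose strong mixing coefficients satisfy $\alpha_r=O(r^{-a})$ for some $a>6$. Let $(\xi_{i,n})_{i\in\mathbb{Z}}$ be a strictly stationary sequence, independent of $(\vec U_i)$, with $\mathrm E(\xi_{0,n})=0$, $\mathrm E(\xi_{0,n}^2)>0$ and $\sup_{n\ge1}\mathrm E(|\xi_{0,n}|^\nu)<\infty$ for all $\nu\ge1$. For $(s,t]\subset[0,1]$ and $A=(u_1,v_1]\times\dots\times(u_d,v_d]\subset[0,1]^d$, let $$\tilde{\mathbb{B}}_n((s,t]\times A)=\frac1{\sqrt n}\sum_{i=\lfloor ns\rfloor+1}^{\lfloor nt\rfloor}\xi_{i,n}\{\mathbf 1(\vec U_i\in A)-\nu(A)\},\qquad \nu(A)=P(\vec U_1\in A).$$ Then for any $q\in(2a/(a-3),4)$ there is a constant $\kappa>0$ such that for all $n$, all $(s,t]\subset[0,1]$ and all such $A$, $$\mathrm E\big[\{\tilde{\mathbb{B}}_n((s,t]\times A)\}^4\big]\le\kappa\big[\lambda_n(s,t)^2\{\nu(A)\}^{4/q}+n^{-1}\lambda_n(s,t)\{\nu(A)\}^{2/q}\big].$$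
   Context: $\lambda_n(s,t)=(\lfloor nt\rfloor-\lfloor ns\rfloor)/n$. Strong mixing coefficients: $\alpha_r=\sup_p\sup_{A\in\mathcal F_{-\infty}^p,B\in\mathcal F_{p+r}^\infty}|P(A\cap B)-P(A)P(B)|$, $\mathcal F_a^b=\sigma(\vec U_i:a\le i\le b)$. *)

theory Defs
  imports "HOL-Probability.Probability"
begin

definition gen_events :: "'a measure \<Rightarrow> (int \<Rightarrow> 'a \<Rightarrow> 'b::topological_space) \<Rightarrow> int set \<Rightarrow> 'a set set" where
  "gen_events M X I = sigma_sets (space M) (\<Union>i\<in>I. {X i -` B \<inter> space M | B. B \<in> sets borel})"

definition strictly_stationary :: "'a measure \<Rightarrow> (int \<Rightarrow> 'a \<Rightarrow> 'b::topological_space) \<Rightarrow> bool" where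
  "strictly_stationary M X \<longleftrightarrow>
     (\<forall>k J. finite J \<longrightarrow>
        distr M (PiM J (\<lambda>_. borel)) (\<lambda>\<omega>. \<lambda>i\<in>J. X (i + k) \<omega>)
      = distr M (PiM J (\<lambda>_. borel)) (\<lambda>\<omega>. \<lambda>i\<in>J. X i \<omega>))"

definition mixing_coeff :: "'a measure \<Rightarrow> (int \<Rightarrow> 'a \<Rightarrow> 'b::topological_space) \<Rightarrow> nat \<Rightarrow> real" where
  "mixing_coeff M X r = Sup {\<bar>measure M (A \<inter> B) - measure M A * measure M B\<bar> | p A B.
       A \<in> gen_events M X {..p} \<and> B \<in> gen_events M X {p + int r..}}"

definition box_oc :: "real ^ 'd \<Rightarrow> real ^ 'd \<Rightarrow> (real ^ 'd) set" where
  "box_oc u v = {x. \<forall>j. u $ j < x $ j \<and> x $ j \<le> v $ j}"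

definition lambda_n :: "nat \<Rightarrow> real \<Rightarrow> real \<Rightarrow> real" where
  "lambda_n n s t = real_of_int (\<lfloor>real n * t\<rfloor> - \<lfloor>real n * s\<rfloor>) / real n"

definition Btilde :: "'a measure \<Rightarrow> (int \<Rightarrow> 'a \<Rightarrow> real ^ 'd) \<Rightarrow> (nat \<Rightarrow> int \<Rightarrow> 'a \<Rightarrow> real)
    \<Rightarrow> nat \<Rightarrow> real \<Rightarrow> real \<Rightarrow> (real ^ 'd) set \<Rightarrow> 'a \<Rightarrow> real" where
  "Btilde M U Xi n s t A \<omega> =
     (\<Sum>i\<in>{\<lfloor>real n * s\<rfloor><..\<lfloor>real n * t\<rfloor>}.
        Xi n i \<omega> * (indicator A (U i \<omega>) - measure M {\<omega>'\<in>space M. U 1 \<omega>' \<in> A})) / sqrt (real n)"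

end

theory Submission
  imports Defs
begin

text \<open>
  Expanding the fourth power turns the moment into a sum over quadruples of indices. By
  independence each term factors into \<open>E[\<xi>\<^sub>w\<xi>\<^sub>x\<xi>\<^sub>y\<xi>\<^sub>z]\<close>, bounded by \<open>E \<xi>\<^sup>4\<close>, and the moment of
  \<open>Y\<^sub>w Y\<^sub>x Y\<^sub>y Y\<^sub>z\<close> with \<open>Y\<^sub>i = 1(U\<^sub>i \<in> A) - \<nu>(A)\<close>. For sorted indices, cutting at one of the
  three gaps \<open>g\<close> and applying the mixing inequality to the two blocks bounds the latter by a
  multiple of \<open>min(\<nu>, K g\<^sup>-\<^sup>a)\<close> for an outer gap, and by such a term plus a product of two of them
  for the middle gap (the blocks of a single \<open>Y\<close> have mean zero). The interpolation
  \<open>min(\<nu>, K g\<^sup>-\<^sup>a) \<le> \<nu>\<^sup>\<theta> (K g\<^sup>-\<^sup>a)\<^sup>1\<^sup>-\<^sup>\<theta>\<close> with \<open>\<theta> = 2/q\<close> is summable in \<open>g\<close> because \<open>(1 - \<theta>) a > 3\<close>, so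
  the sum over quadruples in a window of length \<open>m\<close> is \<open>O(m \<nu>\<^sup>2\<^sup>/\<^sup>q + m\<^sup>2 \<nu>\<^sup>4\<^sup>/\<^sup>q)\<close>; dividing by
  \<open>n\<^sup>2\<close> gives the bound.
\<close>

section \<open>Generated sigma-algebras, independence and stationarity\<close>

lemma gen_events_subset_sets:
  assumes "\<And>i. i \<in> I \<Longrightarrow> X i \<in> borel_measurable M"
  shows "gen_events M X I \<subseteq> sets M"
  unfolding gen_events_def by (rule sets.sigma_sets_subset) (use assms in auto)

lemma sigma_algebra_gen_events: "sigma_algebra (space M) (gen_events M X I)"
  unfolding gen_events_def by (rule sigma_algebra_sigma_sets) auto

lemma gen_events_Int:
  "C \<in> gen_events M X I \<Longrightarrow> D \<in> gen_events M X I \<Longrightarrow> C \<inter> D \<in> gen_events M X I"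
  using sigma_algebra_gen_events
  by (meson semiring_of_sets.Int ring_of_sets_def algebra_def sigma_algebra_def)

lemma preimage_in_gen_events:
  "i \<in> I \<Longrightarrow> B \<in> sets borel \<Longrightarrow> {\<omega>\<in>space M. X i \<omega> \<in> B} \<in> gen_events M X I"
  unfolding gen_events_def by (rule sigma_sets.Basic) (auto intro!: exI[of _ B] exI[of _ i])

lemma space_in_gen_events: "space M \<in> gen_events M X I"
  unfolding gen_events_def by (rule sigma_sets_top)

definition gen_measure :: "'a measure \<Rightarrow> (int \<Rightarrow> 'a \<Rightarrow> 'b::topological_space) \<Rightarrow> 'a measure" where
  "gen_measure M X = sigma (space M) (\<Union>i. {X i -` B \<inter> space M | B. B \<in> sets borel})"

lemma sets_gen_measure: "sets (gen_measure M X) = gen_events M X UNIV"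
  unfolding gen_measure_def gen_events_def by (rule sets_measure_of) auto

lemma space_gen_measure: "space (gen_measure M X) = space M"
  unfolding gen_measure_def by (rule space_measure_of) auto

lemma measurable_gen_measure: "X i \<in> borel_measurable (gen_measure M X)"
proof (rule measurableI)
  fix B :: "'b set" assume "B \<in> sets borel"
  then show "X i -` B \<inter> space (gen_measure M X) \<in> sets (gen_measure M X)"
    unfolding sets_gen_measure space_gen_measure gen_events_def by (intro sigma_sets.Basic) auto
qed auto

lemma sigma_sets_vimage_subset_gen_events:
  assumes "F \<in> borel_measurable (gen_measure M X)"
  shows "sigma_sets (space M) {F -` B \<inter> space M | B. B \<in> sets borel} \<subseteq> gen_events M X UNIV"
proof -
  have "{F -` B \<inter> space M | B. B \<in> sets borel} \<subseteq> sets (gen_measure M X)"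
    using assms unfolding space_gen_measure[symmetric, of M X] by (auto intro: measurable_sets)
  then show ?thesis
    using sets.sigma_sets_subset[of _ "gen_measure M X"] unfolding space_gen_measure sets_gen_measure
    by blast
qed

lemma (in prob_space) indep_gen_events_integral_mult:
  fixes F G :: "'a \<Rightarrow> real"
  assumes ind: "indep_set (gen_events M X UNIV) (gen_events M Z UNIV)"
    and F: "F \<in> borel_measurable (gen_measure M X)" "F \<in> borel_measurable M" "integrable M F"
    and G: "G \<in> borel_measurable (gen_measure M Z)" "G \<in> borel_measurable M" "integrable M G"
  shows "integrable M (\<lambda>\<omega>. F \<omega> * G \<omega>)"
    and "(\<integral>\<omega>. F \<omega> * G \<omega> \<partial>M) = (\<integral>\<omega>. F \<omega> \<partial>M) * (\<integral>\<omega>. G \<omega> \<partial>M)"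
proof -
  have "indep_set (sigma_sets (space M) {F -` B \<inter> space M | B. B \<in> sets borel})
      (sigma_sets (space M) {G -` B \<inter> space M | B. B \<in> sets borel})"
    using ind unfolding indep_set_def
    by (rule indep_sets_mono_sets)
       (use sigma_sets_vimage_subset_gen_events[OF F(1)] sigma_sets_vimage_subset_gen_events[OF G(1)]
         in \<open>auto split: bool.split\<close>)
  then have FG: "indep_var borel F borel G"
    unfolding indep_var_eq using F(2) G(2) by auto
  show "integrable M (\<lambda>\<omega>. F \<omega> * G \<omega>)" by (rule indep_var_integrable[OF FG F(3) G(3)])
  show "(\<integral>\<omega>. F \<omega> * G \<omega> \<partial>M) = (\<integral>\<omega>. F \<omega> \<partial>M) * (\<integral>\<omega>. G \<omega> \<partial>M)"
    by (rule indep_var_lebesgue_integral[OF FG F(3) G(3)])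
qed

lemma (in prob_space) mixing_coeff_upper:
  assumes "C \<in> gen_events M X {..p}" "D \<in> gen_events M X {p + int r..}"
  shows "\<bar>prob (C \<inter> D) - prob C * prob D\<bar> \<le> mixing_coeff M X r"
proof -
  have "bdd_above {\<bar>prob (A \<inter> B) - prob A * prob B\<bar> | p A B.
      A \<in> gen_events M X {..p} \<and> B \<in> gen_events M X {p + int r..}}"
  proof (rule bdd_aboveI, clarify)
    fix A B :: "'a set"
    have "0 \<le> prob A * prob B" "prob A * prob B \<le> 1" by (auto intro: mult_le_one)
    then show "\<bar>prob (A \<inter> B) - prob A * prob B\<bar> \<le> 1"
      using measure_nonneg[of M "A \<inter> B"] prob_le_1[of "A \<inter> B"] by linarith
  qed
  then show ?thesis unfolding mixing_coeff_def by (rule cSup_upper[rotated]) (use assms in blast)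
qed

lemma (in prob_space) mixing_events_bound:
  assumes "\<exists>K. \<forall>r\<ge>1. mixing_coeff M X r \<le> K * real r powr (- a)"
  obtains K where "0 \<le> K"
    and "\<And>p r C D. r \<ge> 1 \<Longrightarrow> C \<in> gen_events M X {..p} \<Longrightarrow> D \<in> gen_events M X {p + int r..}
      \<Longrightarrow> \<bar>prob (C \<inter> D) - prob C * prob D\<bar> \<le> K * real r powr (- a)"
proof -
  obtain K0 where K0: "\<And>r. r \<ge> 1 \<Longrightarrow> mixing_coeff M X r \<le> K0 * real r powr (- a)"
    using assms by blast
  show ?thesis
  proof (rule that[of "max K0 0"])
    fix p r C D assume "r \<ge> 1" "C \<in> gen_events M X {..p}" "D \<in> gen_events M X {p + int r..}"
    then have "\<bar>prob (C \<inter> D) - prob C * prob D\<bar> \<le> K0 * real r powr (- a)"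
      using mixing_coeff_upper K0 order_trans by blast
    also have "\<dots> \<le> max K0 0 * real r powr (- a)" by (intro mult_right_mono) auto
    finally show "\<bar>prob (C \<inter> D) - prob C * prob D\<bar> \<le> max K0 0 * real r powr (- a)" .
  qed simp
qed

lemma stationary_distr:
  fixes X :: "int \<Rightarrow> 'a \<Rightarrow> 'b::topological_space"
  assumes st: "strictly_stationary M X" and meas: "\<And>i. X i \<in> borel_measurable M"
  shows "distr M borel (X i) = distr M borel (X 0)"
proof -
  have shift: "distr M (PiM {0} (\<lambda>_. borel)) (\<lambda>\<omega>. \<lambda>j\<in>{0}. X (j + i) \<omega>)
      = distr M (PiM {0} (\<lambda>_. borel)) (\<lambda>\<omega>. \<lambda>j\<in>{0}. X j \<omega>)"
    using st unfolding strictly_stationary_def by blast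
  have proj: "(\<lambda>f. f 0) \<in> measurable (PiM {0} (\<lambda>_. borel)) (borel :: 'b measure)"
    by (rule measurable_component_singleton) simp
  have "(\<lambda>\<omega>. \<lambda>j\<in>{0::int}. X (j + i) \<omega>) \<in> measurable M (PiM {0} (\<lambda>_. borel))"
    "(\<lambda>\<omega>. \<lambda>j\<in>{0::int}. X j \<omega>) \<in> measurable M (PiM {0} (\<lambda>_. borel))"
    using meas by (auto intro!: measurable_restrict)
  then show ?thesis
    using arg_cong[OF shift, of "\<lambda>N. distr N borel (\<lambda>f. f 0)"]
    by (simp add: distr_distr[OF proj] comp_def)
qed

lemma stationary_measure_eq:
  assumes st: "strictly_stationary M X" and meas: "\<And>i. X i \<in> borel_measurable M"
    and B: "B \<in> sets borel"
  shows "measure M {\<omega>\<in>space M. X i \<omega> \<in> B} = measure M {\<omega>\<in>space M. X 0 \<omega> \<in> B}"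
proof -
  have vimage: "\<And>j. {\<omega>\<in>space M. X j \<omega> \<in> B} = X j -` B \<inter> space M" by auto
  show ?thesis
    using arg_cong[OF stationary_distr[OF st meas, of i], of "\<lambda>N. measure N B"] meas B
    unfolding vimage by (simp add: measure_distr)
qed

lemma stationary_integral_eq:
  fixes f :: "'b::topological_space \<Rightarrow> real"
  assumes st: "strictly_stationary M X" and meas: "\<And>i. X i \<in> borel_measurable M"
    and f: "f \<in> borel_measurable borel"
  shows "integrable M (\<lambda>\<omega>. f (X i \<omega>)) \<longleftrightarrow> integrable M (\<lambda>\<omega>. f (X 0 \<omega>))"
    and "(\<integral>\<omega>. f (X i \<omega>) \<partial>M) = (\<integral>\<omega>. f (X 0 \<omega>) \<partial>M)"
  using stationary_distr[OF st meas, of i]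
    integrable_distr_eq[OF meas f, of i] integrable_distr_eq[OF meas f, of 0]
    integral_distr[OF meas f, of i] integral_distr[OF meas f, of 0]
  by simp_all

lemma box_oc_borel: "box_oc u v \<in> sets borel"
proof -
  have "box_oc u v = (\<Inter>j. {x. u $ j < x $ j} \<inter> {x. x $ j \<le> v $ j})"
    unfolding box_oc_def by auto
  also have "\<dots> \<in> sets borel"
  proof (rule sets.finite_INT)
    fix j
    have "open {x :: real ^ 'a. u $ j < x $ j}" "closed {x :: real ^ 'a. x $ j \<le> v $ j}"
      by (intro open_Collect_less closed_Collect_le continuous_intros)+
    then show "{x. u $ j < x $ j} \<inter> {x. x $ j \<le> v $ j} \<in> sets borel" by auto
  qed auto
  finally show ?thesis .
qed

lemma abs_mult_le_half_sum_squares: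
  fixes x y :: real
  shows "\<bar>x * y\<bar> \<le> (x\<^sup>2 + y\<^sup>2) / 2"
proof -
  have "0 \<le> (\<bar>x\<bar> - \<bar>y\<bar>)\<^sup>2" by simp
  then show ?thesis by (simp add: power2_diff abs_mult)
qed

lemma abs_mult4_le_mean_power4:
  fixes a b c d :: real
  shows "\<bar>a * b * c * d\<bar> \<le> (a ^ 4 + b ^ 4 + c ^ 4 + d ^ 4) / 4"
proof -
  have square_prod: "(x * y)\<^sup>2 \<le> (x ^ 4 + y ^ 4) / 2" for x y :: real
    using abs_mult_le_half_sum_squares[of "x\<^sup>2" "y\<^sup>2"]
    by (simp add: power_mult_distrib power_mult[symmetric])
  have "\<bar>a * b * c * d\<bar> = \<bar>(a * b) * (c * d)\<bar>" by (simp add: mult.assoc)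
  also have "\<dots> \<le> ((a * b)\<^sup>2 + (c * d)\<^sup>2) / 2" by (rule abs_mult_le_half_sum_squares)
  also have "\<dots> \<le> ((a ^ 4 + b ^ 4) / 2 + (c ^ 4 + d ^ 4) / 2) / 2"
    using square_prod[of a b] square_prod[of c d] by (intro divide_right_mono add_mono) auto
  also have "\<dots> = (a ^ 4 + b ^ 4 + c ^ 4 + d ^ 4) / 4" by (simp add: field_simps)
  finally show ?thesis .
qed

lemma min_le_powr_interpolation:
  fixes x y \<theta> :: real
  assumes "0 \<le> x" "0 \<le> y" "0 \<le> \<theta>" "\<theta> \<le> 1"
  shows "min x y \<le> x powr \<theta> * y powr (1 - \<theta>)"
proof (cases "x \<le> y")
  case True
  have "min x y = x powr \<theta> * x powr (1 - \<theta>)" using True assms by (simp add: powr_add[symmetric])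
  also have "\<dots> \<le> x powr \<theta> * y powr (1 - \<theta>)" using True assms by (intro mult_left_mono powr_mono2) auto
  finally show ?thesis .
next
  case False
  have "min x y = y powr \<theta> * y powr (1 - \<theta>)" using False assms by (simp add: powr_add[symmetric])
  also have "\<dots> \<le> x powr \<theta> * y powr (1 - \<theta>)" using False assms by (intro mult_right_mono powr_mono2) auto
  finally show ?thesis .
qed

lemma le_cube_roots_mult:
  fixes w y1 y2 y3 :: real
  assumes "0 \<le> w" "w \<le> y1" "w \<le> y2" "w \<le> y3"
  shows "w \<le> y1 powr (1/3) * y2 powr (1/3) * y3 powr (1/3)"
proof -
  have "w = w powr (1/3) * w powr (1/3) * w powr (1/3)"
    using assms(1) by (simp add: powr_add[symmetric])
  also have "\<dots> \<le> y1 powr (1/3) * y2 powr (1/3) * y3 powr (1/3)"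
    using assms by (intro mult_mono powr_mono2) auto
  finally show ?thesis .
qed

lemma sorted4_wlog:
  fixes P :: "'a::linorder \<Rightarrow> 'a \<Rightarrow> 'a \<Rightarrow> 'a \<Rightarrow> bool"
  assumes sorted: "\<And>a b c d. a \<le> b \<Longrightarrow> b \<le> c \<Longrightarrow> c \<le> d \<Longrightarrow> P a b c d"
    and swap12: "\<And>a b c d. P a b c d \<Longrightarrow> P b a c d"
    and swap23: "\<And>a b c d. P a b c d \<Longrightarrow> P a c b d"
    and swap34: "\<And>a b c d. P a b c d \<Longrightarrow> P a b d c"
  shows "P a b c d"
proof -
  have insert_first: "P a b c d" if "b \<le> c" "c \<le> d" for a b c d
  proof -
    consider "a \<le> b" | "b \<le> a" "a \<le> c" | "c \<le> a" "a \<le> d" | "d \<le> a"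
      by (meson linorder_le_cases)
    then show ?thesis
      by cases (use sorted swap12 swap23 swap34 that in meson)+
  qed
  consider "b \<le> c" "c \<le> d" | "b \<le> d" "d \<le> c" | "c \<le> b" "b \<le> d" | "c \<le> d" "d \<le> b"
    | "d \<le> b" "b \<le> c" | "d \<le> c" "c \<le> b"
    by (meson linorder_le_cases)
  then show ?thesis
    by cases (use insert_first swap23 swap34 in meson)+
qed

lemma sum_distance_le_twice_suminf:
  fixes f :: "nat \<Rightarrow> real" and I :: "int set"
  assumes f0: "\<And>n. 0 \<le> f n" and sf: "summable f" and fin: "finite I"
  shows "(\<Sum>x\<in>I. f (nat \<bar>x - y\<bar>)) \<le> 2 * suminf f"
proof -
  have "(\<Sum>x\<in>I. f (nat \<bar>x - y\<bar>))
      = (\<Sum>x\<in>I \<inter> {y..}. f (nat (x - y))) + (\<Sum>x\<in>I - {y..}. f (nat (y - x)))"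
    by (subst sum.Int_Diff[OF fin, of _ "{y..}"]) (auto intro!: arg_cong2[where f="(+)"] sum.cong)
  also have "(\<Sum>x\<in>I \<inter> {y..}. f (nat (x - y))) = sum f ((\<lambda>x. nat (x - y)) ` (I \<inter> {y..}))"
    by (rule sum.reindex[symmetric, unfolded comp_def]) (auto simp: inj_on_def)
  also have "(\<Sum>x\<in>I - {y..}. f (nat (y - x))) = sum f ((\<lambda>x. nat (y - x)) ` (I - {y..}))"
    by (rule sum.reindex[symmetric, unfolded comp_def]) (auto simp: inj_on_def)
  also have "sum f ((\<lambda>x. nat (x - y)) ` (I \<inter> {y..})) \<le> suminf f"
    using fin f0 by (intro sum_le_suminf sf) auto
  also have "sum f ((\<lambda>x. nat (y - x)) ` (I - {y..})) \<le> suminf f"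
    using fin f0 by (intro sum_le_suminf sf) auto
  finally show ?thesis by simp
qed

definition sum4 :: "'i set \<Rightarrow> ('i \<Rightarrow> 'i \<Rightarrow> 'i \<Rightarrow> 'i \<Rightarrow> real) \<Rightarrow> real" where
  "sum4 I f = (\<Sum>w\<in>I. \<Sum>x\<in>I. \<Sum>y\<in>I. \<Sum>z\<in>I. f w x y z)"

lemma sum4_swap12: "sum4 I (\<lambda>w x y z. f x w y z) = sum4 I f"
  unfolding sum4_def by (rule sum.swap)

lemma sum4_swap23: "sum4 I (\<lambda>w x y z. f w y x z) = sum4 I f"
  unfolding sum4_def by (intro sum.cong refl sum.swap)

lemma sum4_swap34: "sum4 I (\<lambda>w x y z. f w x z y) = sum4 I f"
  unfolding sum4_def by (intro sum.cong refl sum.swap)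

lemma sum4_mono: "(\<And>w x y z. f w x y z \<le> g w x y z) \<Longrightarrow> sum4 I f \<le> sum4 I g"
  unfolding sum4_def by (intro sum_mono) auto

lemma sum4_cmult: "sum4 I (\<lambda>w x y z. c * f w x y z) = c * sum4 I f"
  unfolding sum4_def by (simp add: sum_distrib_left)

lemma power4_sum: "(sum f I) ^ 4 = sum4 I (\<lambda>w x y z. f w * f x * f y * f z)"
proof -
  have "(sum f I) ^ 4 = sum f I * (sum f I * (sum f I * sum f I))" by (simp add: power4_eq_xxxx)
  also have "\<dots> = (\<Sum>w\<in>I. f w * (\<Sum>x\<in>I. f x * (\<Sum>y\<in>I. f y * sum f I)))"
    by (simp only: sum_distrib_right)
  also have "\<dots> = sum4 I (\<lambda>w x y z. f w * (f x * (f y * f z)))"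
    unfolding sum4_def by (simp only: sum_distrib_left)
  finally show ?thesis by (simp add: mult.assoc)
qed

section \<open>Truncated polynomial decay\<close>

text \<open>\<open>mix_bound \<nu> K a g\<close> is the bound \<open>min(\<nu>, K g\<^sup>-\<^sup>a)\<close> for index blocks separated by a gap
  \<open>g\<close>; at \<open>g = 0\<close> mixing gives nothing and only \<open>\<nu>\<close> remains.\<close>

definition mix_bound :: "real \<Rightarrow> real \<Rightarrow> real \<Rightarrow> nat \<Rightarrow> real" where
  "mix_bound \<nu> K a g = (if g = 0 then \<nu> else min \<nu> (K * real g powr (- a)))"

definition decay_const :: "real \<Rightarrow> real \<Rightarrow> real \<Rightarrow> real \<Rightarrow> real" where
  "decay_const K a \<theta> e = 1 + K powr ((1 - \<theta>) * e) * (\<Sum>g. real g powr (- ((1 - \<theta>) * a * e)))"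

lemma mix_bound_nonneg: "0 \<le> \<nu> \<Longrightarrow> 0 \<le> K \<Longrightarrow> 0 \<le> mix_bound \<nu> K a g"
  by (simp add: mix_bound_def)

lemma mix_bound_antimono:
  assumes "0 \<le> K" "0 \<le> a" "m \<le> n"
  shows "mix_bound \<nu> K a n \<le> mix_bound \<nu> K a m"
proof (cases "m = 0")
  case False
  have "K * real n powr (- a) \<le> K * real m powr (- a)"
    using False assms by (intro mult_left_mono powr_mono2') auto
  then show ?thesis using False assms by (auto simp: mix_bound_def)
qed (simp add: mix_bound_def)

lemma mix_bound_le_rescaled:
  fixes c :: nat
  assumes "0 \<le> K" "0 \<le> a" "0 < c" "R \<le> c * G"
  shows "mix_bound \<nu> K a G \<le> mix_bound \<nu> (K * c powr a) a R"
proof (cases "R = 0")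
  case False
  then have "G \<noteq> 0" using assms(4) by (metis le_0_eq mult_0_right)
  have "real R \<le> real c * real G" using assms(4) by (metis of_nat_le_iff of_nat_mult)
  then have "real G powr (- a) \<le> (real R / c) powr (- a)"
    using False assms by (intro powr_mono2') (auto simp: field_simps)
  also have "(real R / c) powr (- a) = c powr a * real R powr (- a)"
    by (simp add: powr_divide powr_minus_divide)
  finally have "K * real G powr (- a) \<le> K * c powr a * real R powr (- a)"
    using assms(1) by (simp add: mult_left_mono mult.assoc)
  then show ?thesis using False \<open>G \<noteq> 0\<close> by (auto simp: mix_bound_def)
qed (simp add: mix_bound_def)

lemma mix_bound_powr_le:
  assumes \<nu>: "0 \<le> \<nu>" "\<nu> \<le> 1" and K: "0 \<le> K" and \<theta>: "0 < \<theta>" "\<theta> < 1" and e: "0 < e" "e \<le> 1"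
  shows "mix_bound \<nu> K a g powr e
     \<le> \<nu> powr (\<theta> * e) * (0 ^ g + K powr ((1 - \<theta>) * e) * real g powr (- ((1 - \<theta>) * a * e)))"
proof (cases "g = 0")
  case True
  have "\<nu> powr e \<le> \<nu> powr (\<theta> * e)" using \<nu> \<theta> e by (intro powr_mono') auto
  then show ?thesis using True by (simp add: mix_bound_def)
next
  case False
  have "mix_bound \<nu> K a g powr e \<le> (\<nu> powr \<theta> * (K * real g powr (- a)) powr (1 - \<theta>)) powr e"
    using False \<nu> K \<theta> e by (auto simp: mix_bound_def intro!: powr_mono2 min_le_powr_interpolation)
  also have "\<dots> = \<nu> powr (\<theta> * e) * (K powr ((1 - \<theta>) * e) * real g powr (- ((1 - \<theta>) * a * e)))"
    by (simp add: powr_mult powr_powr mult_ac)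
  finally show ?thesis using False by (simp add: zero_power)
qed

lemma mix_bound_powr_summable:
  assumes \<nu>: "0 \<le> \<nu>" "\<nu> \<le> 1" and K: "0 \<le> K" and \<theta>: "0 < \<theta>" "\<theta> < 1" and e: "0 < e" "e \<le> 1"
    and decay: "(1 - \<theta>) * a * e > 1"
  shows "summable (\<lambda>g. mix_bound \<nu> K a g powr e)"
    and "(\<Sum>g. mix_bound \<nu> K a g powr e) \<le> \<nu> powr (\<theta> * e) * decay_const K a \<theta> e"
proof -
  define b where "b g = \<nu> powr (\<theta> * e) * (0 ^ g + K powr ((1 - \<theta>) * e) * real g powr (- ((1 - \<theta>) * a * e)))"
    for g :: nat
  have zeta: "summable (\<lambda>g::nat. real g powr (- ((1 - \<theta>) * a * e)))"
    using decay by (subst summable_real_powr_iff) auto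
  have geometric: "(\<lambda>g::nat. (0::real) ^ g) sums 1"
    using geometric_sums[of "0::real"] by simp
  have b: "b sums (\<nu> powr (\<theta> * e) * decay_const K a \<theta> e)"
    unfolding b_def decay_const_def
    by (intro sums_mult sums_add geometric summable_sums zeta summable_mult)
  have le_b: "mix_bound \<nu> K a g powr e \<le> b g" for g
    unfolding b_def by (rule mix_bound_powr_le[OF \<nu> K \<theta> e])
  show summable: "summable (\<lambda>g. mix_bound \<nu> K a g powr e)"
    by (rule summable_comparison_test'[of b 0]) (use b le_b in \<open>auto simp: sums_iff\<close>)
  show "(\<Sum>g. mix_bound \<nu> K a g powr e) \<le> \<nu> powr (\<theta> * e) * decay_const K a \<theta> e"
    using suminf_le[OF le_b summable] b by (simp add: sums_iff)
qed

lemma decay_const_ge_1: "(1 - \<theta>) * a * e > 1 \<Longrightarrow> 1 \<le> decay_const K a \<theta> e"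
  unfolding decay_const_def
  by (auto intro!: mult_nonneg_nonneg suminf_nonneg simp: summable_real_powr_iff)

text \<open>\<open>256 = 16\<^sup>2\<close> comes from the gap estimates; \<open>32 = 4 \<cdot> 2\<^sup>3\<close> and \<open>12 = 3 \<cdot> 2\<^sup>2\<close> from the four star and
  three pair terms of the symmetrisation, each distance sum being at most twice a series.\<close>

definition moment_const :: "real \<Rightarrow> real \<Rightarrow> real \<Rightarrow> real" where
  "moment_const K a \<theta> = 256 * (32 * decay_const (K * 3 powr a) a \<theta> (1/3) ^ 3 + 12 * decay_const K a \<theta> 1 ^ 2)"

lemma moment_const_pos: "(1 - \<theta>) * a > 3 \<Longrightarrow> 0 < moment_const K a \<theta>"
  using decay_const_ge_1[of \<theta> a "1/3" "K * 3 powr a"]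
  by (auto simp: moment_const_def intro!: add_pos_nonneg)

section \<open>Moments of products of centred indicators of a mixing sequence\<close>

locale mixing_indicators = prob_space M for M :: "'a measure" +
  fixes U :: "int \<Rightarrow> 'a \<Rightarrow> 'b::topological_space" and A :: "'b set" and K a :: real
  assumes U_meas: "\<And>i. U i \<in> borel_measurable M"
    and A_borel: "A \<in> sets borel"
    and K_nonneg: "0 \<le> K" and a_pos: "0 < a"
    and prob_stationary: "\<And>i. prob {\<omega>\<in>space M. U i \<omega> \<in> A} = prob {\<omega>\<in>space M. U 1 \<omega> \<in> A}"
    and mixing: "\<And>p r C D. r \<ge> 1 \<Longrightarrow> C \<in> gen_events M U {..p} \<Longrightarrow> D \<in> gen_events M U {p + int r..}
        \<Longrightarrow> \<bar>prob (C \<inter> D) - prob C * prob D\<bar> \<le> K * real r powr (- a)"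
begin

definition "E i = {\<omega>\<in>space M. U i \<omega> \<in> A}"
definition "nu = prob (E 1)"
definition "Y i \<omega> = indicator (E i) \<omega> - nu"
definition "prodY L \<omega> = prod_list (map (\<lambda>k. Y k \<omega>) L)"
definition "indicator_prodY C L \<omega> = indicator C \<omega> * prodY L \<omega>"

lemma sets_E [measurable]: "E i \<in> sets M"
  unfolding E_def using U_meas A_borel by measurable

lemma E_in_gen_events: "i \<in> I \<Longrightarrow> E i \<in> gen_events M U I"
  unfolding E_def by (rule preimage_in_gen_events[OF _ A_borel])

lemma gen_events_U_subset: "gen_events M U I \<subseteq> sets M"
  by (rule gen_events_subset_sets) (rule U_meas)

lemma prob_E: "prob (E i) = nu"
  using prob_stationary unfolding E_def nu_def by auto

lemma nu_nonneg: "0 \<le> nu" and nu_le_1: "nu \<le> 1"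
  unfolding nu_def by auto

lemma prodY_Nil [simp]: "prodY [] \<omega> = 1"
  and prodY_Cons: "prodY (k # L) \<omega> = Y k \<omega> * prodY L \<omega>"
  by (simp_all add: prodY_def)

lemma prodY_append: "prodY (P @ F) \<omega> = prodY P \<omega> * prodY F \<omega>"
  by (simp add: prodY_def)

lemma Y_measurable [measurable]: "Y i \<in> borel_measurable M"
  unfolding Y_def by measurable

lemma prodY_measurable [measurable]: "prodY L \<in> borel_measurable M"
  by (induction L) (auto simp: prodY_Cons)

lemma abs_Y_le_1: "\<bar>Y i \<omega>\<bar> \<le> 1"
  using nu_nonneg nu_le_1 by (auto simp: Y_def indicator_def)

lemma abs_prodY_le_1: "\<bar>prodY L \<omega>\<bar> \<le> 1"
  by (induction L) (auto simp: prodY_Cons abs_mult intro!: mult_le_one abs_Y_le_1)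

lemma abs_indicator_prodY_le_1: "\<bar>indicator_prodY C L \<omega>\<bar> \<le> 1"
  using abs_prodY_le_1[of L \<omega>] by (auto simp: indicator_prodY_def indicator_def)

lemma integrable_prodY: "integrable M (prodY L)"
  by (rule integrable_const_bound[where B=1]) (auto intro: abs_prodY_le_1)

lemma indicator_prodY_measurable [measurable]:
  "C \<in> sets M \<Longrightarrow> indicator_prodY C L \<in> borel_measurable M"
  unfolding indicator_prodY_def by (intro borel_measurable_times borel_measurable_indicator prodY_measurable)

lemma integrable_indicator_prodY: "C \<in> sets M \<Longrightarrow> integrable M (indicator_prodY C L)"
  using abs_indicator_prodY_le_1 by (auto intro!: integrable_const_bound[where B=1])

lemma integrable_indicator_prodY_mult:
  "C \<in> sets M \<Longrightarrow> D \<in> sets M \<Longrightarrow> integrable M (\<lambda>\<omega>. indicator_prodY C L \<omega> * indicator_prodY D L' \<omega>)"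
  using abs_indicator_prodY_le_1
  by (auto intro!: integrable_const_bound[where B=1] AE_I2 mult_le_one simp: abs_mult)

lemma indicator_prodY_Cons:
  "indicator_prodY C (k # L) \<omega> = indicator_prodY (C \<inter> E k) L \<omega> - nu * indicator_prodY C L \<omega>"
  by (simp add: indicator_prodY_def prodY_Cons Y_def indicator_inter_arith algebra_simps)

definition cov :: "('a \<Rightarrow> real) \<Rightarrow> ('a \<Rightarrow> real) \<Rightarrow> real" where
  "cov f g = (\<integral>\<omega>. f \<omega> * g \<omega> \<partial>M) - (\<integral>\<omega>. f \<omega> \<partial>M) * (\<integral>\<omega>. g \<omega> \<partial>M)"

lemma cov_commute: "cov f g = cov g f"
  by (simp add: cov_def mult.commute)

lemma cov_indicator_prodY_Cons:
  assumes "C \<in> sets M" "D \<in> sets M"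
  shows "cov (indicator_prodY C P) (indicator_prodY D (k # F))
    = cov (indicator_prodY C P) (indicator_prodY (D \<inter> E k) F) - nu * cov (indicator_prodY C P) (indicator_prodY D F)"
proof -
  let ?f = "indicator_prodY C P" and ?g1 = "indicator_prodY (D \<inter> E k) F" and ?g0 = "indicator_prodY D F"
  have int: "integrable M ?f" "integrable M ?g1" "integrable M ?g0"
    "integrable M (\<lambda>\<omega>. ?f \<omega> * ?g1 \<omega>)" "integrable M (\<lambda>\<omega>. ?f \<omega> * ?g0 \<omega>)"
    using assms by (auto intro!: integrable_indicator_prodY integrable_indicator_prodY_mult)
  have "(\<integral>\<omega>. ?f \<omega> * (?g1 \<omega> - nu * ?g0 \<omega>) \<partial>M) = (\<integral>\<omega>. ?f \<omega> * ?g1 \<omega> - nu * (?f \<omega> * ?g0 \<omega>) \<partial>M)"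
    by (simp add: algebra_simps)
  then show ?thesis
    using int by (simp add: cov_def indicator_prodY_Cons algebra_simps)
qed

lemma abs_diff_scaled_le:
  fixes x y b :: real
  shows "\<bar>x\<bar> \<le> b \<Longrightarrow> \<bar>y\<bar> \<le> b \<Longrightarrow> \<bar>x - nu * y\<bar> \<le> 2 * b"
  using nu_nonneg nu_le_1 mult_left_le_one_le[of "\<bar>y\<bar>" nu]
  by (auto simp: abs_mult intro!: abs_triangle_ineq4[THEN order_trans])

text \<open>The mixing inequality for events extends to products of centred indicators: each factor
  \<open>Y\<^sub>k\<close> splits into an event and a multiple of the remaining product, which doubles the bound.\<close>

lemma cov_indicator_prodY_future:
  fixes p :: int and r :: nat
  assumes r: "r \<ge> 1" and F: "\<forall>k\<in>set F. k \<ge> p + int r"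
    and C: "C \<in> gen_events M U {..p}" and D: "D \<in> gen_events M U {p + int r..}"
  shows "\<bar>cov (indicator_prodY C []) (indicator_prodY D F)\<bar> \<le> 2 ^ length F * (K * real r powr (- a))"
  using F D
proof (induction F arbitrary: D)
  case Nil
  have "C \<in> sets M" "D \<in> sets M" using C Nil gen_events_U_subset by auto
  then have "cov (indicator_prodY C []) (indicator_prodY D []) = prob (C \<inter> D) - prob C * prob D"
    by (simp add: cov_def indicator_prodY_def indicator_inter_arith[symmetric])
  then show ?case using mixing[OF r C Nil(2)] by simp
next
  case (Cons k F)
  have "D \<inter> E k \<in> gen_events M U {p + int r..}"
    using Cons(2,3) by (intro gen_events_Int E_in_gen_events) auto
  then have "\<bar>cov (indicator_prodY C []) (indicator_prodY (D \<inter> E k) F)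
      - nu * cov (indicator_prodY C []) (indicator_prodY D F)\<bar> \<le> 2 * (2 ^ length F * (K * real r powr (- a)))"
    using Cons by (intro abs_diff_scaled_le) auto
  moreover have "C \<in> sets M" "D \<in> sets M" using C Cons(3) gen_events_U_subset by auto
  ultimately show ?case by (simp add: cov_indicator_prodY_Cons mult.assoc)
qed

lemma cov_indicator_prodY_past_future:
  fixes p :: int and r :: nat
  assumes r: "r \<ge> 1" and P: "\<forall>k\<in>set P. k \<le> p" and F: "\<forall>k\<in>set F. k \<ge> p + int r"
    and C: "C \<in> gen_events M U {..p}" and D: "D \<in> gen_events M U {p + int r..}"
  shows "\<bar>cov (indicator_prodY C P) (indicator_prodY D F)\<bar> \<le> 2 ^ (length P + length F) * (K * real r powr (- a))"
  using P C
proof (induction P arbitrary: C)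
  case Nil
  then show ?case using cov_indicator_prodY_future[OF r F Nil(2) D] by simp
next
  case (Cons k P)
  have "C \<inter> E k \<in> gen_events M U {..p}"
    using Cons(2,3) by (intro gen_events_Int E_in_gen_events) auto
  then have "\<bar>cov (indicator_prodY (C \<inter> E k) P) (indicator_prodY D F)
      - nu * cov (indicator_prodY C P) (indicator_prodY D F)\<bar>
      \<le> 2 * (2 ^ (length P + length F) * (K * real r powr (- a)))"
    using Cons by (intro abs_diff_scaled_le) auto
  moreover have "C \<in> sets M" "D \<in> sets M" using D Cons(3) gen_events_U_subset by auto
  ultimately show ?case
    by (simp add: cov_commute[of "indicator_prodY _ _" "indicator_prodY D F"]
        cov_indicator_prodY_Cons mult.assoc)
qed

lemma integral_prodY_append_decorrelation:
  fixes p :: int and r :: nat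
  assumes r: "r \<ge> 1" and P: "\<forall>k\<in>set P. k \<le> p" and F: "\<forall>k\<in>set F. k \<ge> p + int r"
  shows "\<bar>(\<integral>\<omega>. prodY (P @ F) \<omega> \<partial>M) - (\<integral>\<omega>. prodY P \<omega> \<partial>M) * (\<integral>\<omega>. prodY F \<omega> \<partial>M)\<bar>
    \<le> 2 ^ (length P + length F) * (K * real r powr (- a))"
proof -
  have "cov (indicator_prodY (space M) P) (indicator_prodY (space M) F)
      = (\<integral>\<omega>. prodY (P @ F) \<omega> \<partial>M) - (\<integral>\<omega>. prodY P \<omega> \<partial>M) * (\<integral>\<omega>. prodY F \<omega> \<partial>M)"
    unfolding cov_def indicator_prodY_def prodY_append
    by (intro arg_cong2[where f="(-)"] arg_cong2[where f="(*)"] Bochner_Integration.integral_cong) auto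
  then show ?thesis
    using cov_indicator_prodY_past_future[OF r P F space_in_gen_events space_in_gen_events] by simp
qed

definition "gap_bound = mix_bound nu K a"
definition "gap_root g = mix_bound nu (K * 3 powr a) a g powr (1/3)"

lemma gap_bound_nonneg: "0 \<le> gap_bound g"
  unfolding gap_bound_def using nu_nonneg K_nonneg by (rule mix_bound_nonneg)

lemma gap_root_nonneg: "0 \<le> gap_root g"
  by (simp add: gap_root_def)

lemma abs_integral_prodY_le:
  assumes "L \<noteq> []"
  shows "\<bar>\<integral>\<omega>. prodY L \<omega> \<partial>M\<bar> \<le> 2 * nu"
proof -
  obtain k L' where L: "L = k # L'" using assms by (cases L) auto
  have bound: "\<bar>prodY L \<omega>\<bar> \<le> indicator (E k) \<omega> + nu" for \<omega>
  proof -
    have "\<bar>prodY L \<omega>\<bar> \<le> \<bar>Y k \<omega>\<bar>"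
      using abs_prodY_le_1[of L' \<omega>] by (simp add: L prodY_Cons abs_mult mult_left_le)
    also have "\<dots> \<le> indicator (E k) \<omega> + nu" using nu_nonneg by (auto simp: Y_def indicator_def)
    finally show ?thesis .
  qed
  have "\<bar>\<integral>\<omega>. prodY L \<omega> \<partial>M\<bar> \<le> (\<integral>\<omega>. indicator (E k) \<omega> + nu \<partial>M)"
    using bound integrable_prodY
    by (intro integral_abs_bound[THEN order_trans] integral_mono) (auto simp: emeasure_eq_measure)
  also have "\<dots> = prob (E k) + nu" by (simp add: emeasure_eq_measure prob_space)
  finally show ?thesis by (simp add: prob_E)
qed

lemma integral_Y: "(\<integral>\<omega>. prodY [k] \<omega> \<partial>M) = 0"
proof -
  have "(\<integral>\<omega>. prodY [k] \<omega> \<partial>M) = (\<integral>\<omega>. indicator (E k) \<omega> - nu \<partial>M)"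
    by (simp add: prodY_Cons Y_def)
  also have "\<dots> = prob (E k) - nu" by (simp add: emeasure_eq_measure prob_space)
  finally show ?thesis by (simp add: prob_E)
qed

lemma abs_integral_prodY_append_le:
  fixes p :: int
  assumes P: "\<forall>k\<in>set P. k \<le> p" and F: "\<forall>k\<in>set F. k \<ge> p + int g" and "P \<noteq> []"
    and len: "length P + length F \<le> 4"
  shows "\<bar>\<integral>\<omega>. prodY (P @ F) \<omega> \<partial>M\<bar>
    \<le> 16 * gap_bound g + \<bar>\<integral>\<omega>. prodY P \<omega> \<partial>M\<bar> * \<bar>\<integral>\<omega>. prodY F \<omega> \<partial>M\<bar>"
proof -
  let ?PF = "\<integral>\<omega>. prodY (P @ F) \<omega> \<partial>M" and ?P = "\<integral>\<omega>. prodY P \<omega> \<partial>M" and ?F = "\<integral>\<omega>. prodY F \<omega> \<partial>M"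
  have trivial: "\<bar>?PF\<bar> \<le> 16 * nu"
    using abs_integral_prodY_le[of "P @ F"] \<open>P \<noteq> []\<close> nu_nonneg by auto
  have prod_nonneg: "0 \<le> \<bar>?P\<bar> * \<bar>?F\<bar>" by simp
  show ?thesis
  proof (cases "g = 0")
    case True
    then have "gap_bound g = nu" by (simp add: gap_bound_def mix_bound_def)
    then show ?thesis using trivial prod_nonneg by linarith
  next
    case False
    have "(2::real) ^ (length P + length F) \<le> 2 ^ 4" using len by (intro power_increasing) auto
    then have "(2::real) ^ (length P + length F) * (K * real g powr (- a)) \<le> 16 * (K * real g powr (- a))"
      using K_nonneg by (intro mult_right_mono) auto
    then have "\<bar>?PF - ?P * ?F\<bar> \<le> 16 * (K * real g powr (- a))"
      using integral_prodY_append_decorrelation[OF _ P F] False by force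
    moreover have "\<bar>?PF\<bar> \<le> \<bar>?PF - ?P * ?F\<bar> + \<bar>?P\<bar> * \<bar>?F\<bar>"
      using abs_triangle_ineq[of "?PF - ?P * ?F" "?P * ?F"] by (simp add: abs_mult)
    ultimately have "\<bar>?PF\<bar> \<le> 16 * (K * real g powr (- a)) + \<bar>?P\<bar> * \<bar>?F\<bar>"
      by linarith
    moreover have "gap_bound g = nu \<or> gap_bound g = K * real g powr (- a)"
      using False by (simp add: gap_bound_def mix_bound_def min_def)
    ultimately show ?thesis using trivial prod_nonneg by linarith
  qed
qed

lemma sorted_moment_bounds:
  fixes s0 s1 s2 s3 :: int
  assumes "s0 \<le> s1" "s1 \<le> s2" "s2 \<le> s3"
  defines "h \<equiv> \<bar>\<integral>\<omega>. prodY [s0, s1, s2, s3] \<omega> \<partial>M\<bar>"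
  shows "h \<le> 16 * gap_bound (nat (s1 - s0))" "h \<le> 16 * gap_bound (nat (s3 - s2))"
    "h \<le> 16 * gap_bound (nat (s2 - s1)) + (16 * gap_bound (nat (s1 - s0))) * (16 * gap_bound (nat (s3 - s2)))"
proof -
  have split: "\<bar>\<integral>\<omega>. prodY (P @ F) \<omega> \<partial>M\<bar>
      \<le> 16 * gap_bound (nat (q - p)) + \<bar>\<integral>\<omega>. prodY P \<omega> \<partial>M\<bar> * \<bar>\<integral>\<omega>. prodY F \<omega> \<partial>M\<bar>"
    if "\<forall>k\<in>set P. k \<le> p" "\<forall>k\<in>set F. k \<ge> q" "p \<le> q" "P \<noteq> []" "length P + length F \<le> 4" for P F p q
    using that by (intro abs_integral_prodY_append_le[where p=p]) auto
  show "h \<le> 16 * gap_bound (nat (s1 - s0))"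
    using split[of "[s0]" s0 "[s1, s2, s3]" s1] assms by (simp add: integral_Y)
  show "h \<le> 16 * gap_bound (nat (s3 - s2))"
    using split[of "[s0, s1, s2]" s2 "[s3]" s3] assms by (simp add: integral_Y)
  have "\<bar>\<integral>\<omega>. prodY [s0, s1] \<omega> \<partial>M\<bar> \<le> 16 * gap_bound (nat (s1 - s0))"
    "\<bar>\<integral>\<omega>. prodY [s2, s3] \<omega> \<partial>M\<bar> \<le> 16 * gap_bound (nat (s3 - s2))"
    using split[of "[s0]" s0 "[s1]" s1] split[of "[s2]" s2 "[s3]" s3] assms by (simp_all add: integral_Y)
  then have "\<bar>\<integral>\<omega>. prodY [s0, s1] \<omega> \<partial>M\<bar> * \<bar>\<integral>\<omega>. prodY [s2, s3] \<omega> \<partial>M\<bar>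
      \<le> (16 * gap_bound (nat (s1 - s0))) * (16 * gap_bound (nat (s3 - s2)))"
    by (intro mult_mono) auto
  then show "h \<le> 16 * gap_bound (nat (s2 - s1)) + (16 * gap_bound (nat (s1 - s0))) * (16 * gap_bound (nat (s3 - s2)))"
    using split[of "[s0, s1]" s1 "[s2, s3]" s2] assms by simp
qed

definition "moment4 w x y z = \<bar>\<integral>\<omega>. prodY [w, x, y, z] \<omega> \<partial>M\<bar>"
definition "star_term w x y z = gap_root (nat \<bar>x - w\<bar>) * gap_root (nat \<bar>y - w\<bar>) * gap_root (nat \<bar>z - w\<bar>)"
definition "pair_term w x y z = gap_bound (nat \<bar>x - w\<bar>) * gap_bound (nat \<bar>z - y\<bar>)"
definition "sym_terms w x y z = star_term w x y z + star_term x w y z + star_term y w x z + star_term z w x y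
  + pair_term w x y z + pair_term w y x z + pair_term w z x y"

lemma star_term_nonneg: "0 \<le> star_term w x y z"
  by (simp add: star_term_def gap_root_nonneg)

lemma pair_term_nonneg: "0 \<le> pair_term w x y z"
  by (simp add: pair_term_def gap_bound_nonneg)

text \<open>The largest gap of a sorted quadruple is at least a third of its span, and the span
  dominates the three distances from the smallest index.\<close>

lemma moment4_sorted_le:
  fixes s0 s1 s2 s3 :: int
  assumes sorted: "s0 \<le> s1" "s1 \<le> s2" "s2 \<le> s3"
  shows "moment4 s0 s1 s2 s3 \<le> 256 * sym_terms s0 s1 s2 s3"
proof -
  define g1 g2 g3 where "g1 = nat (s1 - s0)" and "g2 = nat (s2 - s1)" and "g3 = nat (s3 - s2)"
  define R where "R = g1 + g2 + g3"
  let ?W = "mix_bound nu (K * 3 powr a) a"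
  have rescale: "gap_bound G \<le> ?W R" if "R \<le> 3 * G" for G
    using mix_bound_le_rescaled[of K a 3 R G nu] that K_nonneg a_pos by (simp add: gap_bound_def)
  have pair: "(16 * gap_bound g1) * (16 * gap_bound g3) = 256 * pair_term s0 s1 s2 s3"
    using sorted by (simp add: pair_term_def g1_def g3_def)
  have moment: "moment4 s0 s1 s2 s3 \<le> 16 * ?W R + 256 * pair_term s0 s1 s2 s3"
  proof -
    note bounds = sorted_moment_bounds[OF sorted, folded moment4_def g1_def g2_def g3_def, unfolded pair]
    consider "g2 \<le> g1" "g3 \<le> g1" | "g1 \<le> g2" "g3 \<le> g2" | "g1 \<le> g3" "g2 \<le> g3" by linarith
    then show ?thesis
      by cases (use bounds rescale[of g1] rescale[of g2] rescale[of g3] pair_term_nonneg[of s0 s1 s2 s3]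
          in \<open>simp add: R_def; linarith\<close>)+
  qed
  have star: "?W R \<le> star_term s0 s1 s2 s3"
  proof -
    have "nat \<bar>s1 - s0\<bar> = g1" "nat \<bar>s2 - s0\<bar> = g1 + g2" "nat \<bar>s3 - s0\<bar> = R"
      using sorted by (auto simp: g1_def g2_def g3_def R_def)
    then show ?thesis
      unfolding star_term_def gap_root_def
      using K_nonneg a_pos nu_nonneg
      by (simp, intro le_cube_roots_mult mix_bound_nonneg mix_bound_antimono) (auto simp: R_def)
  qed
  show ?thesis
    using moment star star_term_nonneg[of s1 s0 s2 s3] star_term_nonneg[of s2 s0 s1 s3] star_term_nonneg[of s3 s0 s1 s2]
      star_term_nonneg[of s0 s1 s2 s3] pair_term_nonneg[of s0 s2 s1 s3] pair_term_nonneg[of s0 s3 s1 s2]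
    unfolding sym_terms_def distrib_left by linarith
qed

lemma moment4_le_sym_terms: "moment4 w x y z \<le> 256 * sym_terms w x y z"
proof (rule sorted4_wlog[where P = "\<lambda>w x y z. moment4 w x y z \<le> 256 * sym_terms w x y z"])
  have moment4_swap: "moment4 x w y z = moment4 w x y z" "moment4 w y x z = moment4 w x y z"
    "moment4 w x z y = moment4 w x y z" for w x y z
    by (simp_all add: moment4_def prodY_def mult_ac)
  have sym_swap: "sym_terms x w y z = sym_terms w x y z" "sym_terms w y x z = sym_terms w x y z"
    "sym_terms w x z y = sym_terms w x y z" for w x y z
    by (simp_all add: sym_terms_def star_term_def pair_term_def abs_minus_commute mult_ac add_ac)
  show "\<And>a b c d. moment4 a b c d \<le> 256 * sym_terms a b c d \<Longrightarrow> moment4 b a c d \<le> 256 * sym_terms b a c d"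
    "\<And>a b c d. moment4 a b c d \<le> 256 * sym_terms a b c d \<Longrightarrow> moment4 a c b d \<le> 256 * sym_terms a c b d"
    "\<And>a b c d. moment4 a b c d \<le> 256 * sym_terms a b c d \<Longrightarrow> moment4 a b d c \<le> 256 * sym_terms a b d c"
    by (simp_all only: moment4_swap sym_swap)
qed (rule moment4_sorted_le)

lemma sum4_sym_terms: "sum4 I sym_terms = 4 * sum4 I star_term + 3 * sum4 I pair_term"
proof -
  have "sum4 I sym_terms = sum4 I star_term + sum4 I (\<lambda>w x y z. star_term x w y z)
      + sum4 I (\<lambda>w x y z. star_term y w x z) + sum4 I (\<lambda>w x y z. star_term z w x y)
      + sum4 I pair_term + sum4 I (\<lambda>w x y z. pair_term w y x z) + sum4 I (\<lambda>w x y z. pair_term w z x y)"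
    unfolding sym_terms_def sum4_def by (simp add: sum.distrib)
  also have "\<dots> = 4 * sum4 I star_term + 3 * sum4 I pair_term"
    using sum4_swap12[of I "\<lambda>w x y z. star_term w x y z"]
      sum4_swap23[of I "\<lambda>w x y z. star_term x w y z"]
      sum4_swap34[of I "\<lambda>w x y z. star_term y w x z"]
      sum4_swap23[of I pair_term] sum4_swap34[of I "\<lambda>w x y z. pair_term w y x z"]
    by simp
  finally show ?thesis .
qed

lemma sum4_star_term_le:
  assumes "finite I" "summable gap_root"
  shows "sum4 I star_term \<le> real (card I) * (2 * suminf gap_root) ^ 3"
proof -
  have "sum4 I star_term = (\<Sum>w\<in>I. (\<Sum>x\<in>I. gap_root (nat \<bar>x - w\<bar>)) * (\<Sum>y\<in>I. gap_root (nat \<bar>y - w\<bar>))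
      * (\<Sum>z\<in>I. gap_root (nat \<bar>z - w\<bar>)))"
    unfolding sum4_def star_term_def by (simp add: sum_distrib_left sum_distrib_right mult_ac)
  also have "\<dots> \<le> (\<Sum>w\<in>I. (2 * suminf gap_root) * (2 * suminf gap_root) * (2 * suminf gap_root))"
    using sum_distance_le_twice_suminf[OF gap_root_nonneg assms(2,1)] gap_root_nonneg
      suminf_nonneg[OF assms(2) gap_root_nonneg]
    by (intro sum_mono mult_mono) (auto intro!: sum_nonneg mult_nonneg_nonneg)
  finally show ?thesis by (simp add: power3_eq_cube)
qed

lemma sum4_pair_term_le:
  assumes "finite I" "summable gap_bound"
  shows "sum4 I pair_term \<le> (real (card I) * (2 * suminf gap_bound))\<^sup>2"
proof -
  have "sum4 I pair_term
      = (\<Sum>w\<in>I. \<Sum>x\<in>I. gap_bound (nat \<bar>x - w\<bar>) * (\<Sum>y\<in>I. \<Sum>z\<in>I. gap_bound (nat \<bar>z - y\<bar>)))"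
    unfolding sum4_def pair_term_def by (simp only: sum_distrib_left)
  also have "\<dots> = (\<Sum>w\<in>I. \<Sum>x\<in>I. gap_bound (nat \<bar>x - w\<bar>)) * (\<Sum>y\<in>I. \<Sum>z\<in>I. gap_bound (nat \<bar>z - y\<bar>))"
    by (simp only: sum_distrib_right)
  also have "\<dots> \<le> (\<Sum>w\<in>I. 2 * suminf gap_bound) * (\<Sum>y\<in>I. 2 * suminf gap_bound)"
    using sum_distance_le_twice_suminf[OF gap_bound_nonneg assms(2,1)]
    using suminf_nonneg[OF assms(2) gap_bound_nonneg]
    by (intro sum_mono mult_mono) (auto intro!: sum_nonneg gap_bound_nonneg)
  finally show ?thesis by (simp add: power2_eq_square)
qed

lemma gap_bound_summable:
  assumes "0 < \<theta>" "\<theta> < 1" "(1 - \<theta>) * a > 3"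
  shows "summable gap_bound" "suminf gap_bound \<le> nu powr \<theta> * decay_const K a \<theta> 1"
proof -
  have "gap_bound g powr 1 = gap_bound g" for g using gap_bound_nonneg[of g] by simp
  then show "summable gap_bound" "suminf gap_bound \<le> nu powr \<theta> * decay_const K a \<theta> 1"
    using mix_bound_powr_summable[OF nu_nonneg nu_le_1 K_nonneg assms(1,2), of 1 a] assms(3)
    by (simp_all add: gap_bound_def)
qed

lemma gap_root_summable:
  assumes "0 < \<theta>" "\<theta> < 1" "(1 - \<theta>) * a > 3"
  shows "summable gap_root" "suminf gap_root \<le> nu powr (\<theta> * (1/3)) * decay_const (K * 3 powr a) a \<theta> (1/3)"
  using mix_bound_powr_summable[OF nu_nonneg nu_le_1 _ assms(1,2), of "K * 3 powr a" "1/3" a] assms(3)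
    K_nonneg
  by (simp_all add: gap_root_def[abs_def])

lemma sum4_moment4_le:
  assumes fin: "finite I" and \<theta>: "0 < \<theta>" "\<theta> < 1" "(1 - \<theta>) * a > 3"
  shows "sum4 I moment4
    \<le> moment_const K a \<theta> * (real (card I) * nu powr \<theta> + (real (card I))\<^sup>2 * nu powr (2 * \<theta>))"
proof -
  define c CV CD where "c = real (card I)" and "CV = decay_const (K * 3 powr a) a \<theta> (1/3)"
    and "CD = decay_const K a \<theta> 1"
  note gb = gap_bound_summable[OF \<theta>, folded CD_def] and gr = gap_root_summable[OF \<theta>, folded CV_def]
  have c: "0 \<le> c" by (simp add: c_def)
  have cube: "(nu powr (\<theta> / 3)) ^ 3 = nu powr \<theta>"
    using \<theta>(1) by (cases "nu = 0") (simp_all add: powr_power)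
  have square: "(nu powr \<theta>)\<^sup>2 = nu powr (2 * \<theta>)"
    by (cases "nu = 0") (simp_all add: powr_power \<theta>(1) mult.commute)
  have "sum4 I moment4 \<le> 256 * (4 * sum4 I star_term + 3 * sum4 I pair_term)"
    using sum4_mono[of moment4 "\<lambda>w x y z. 256 * sym_terms w x y z" I, OF moment4_le_sym_terms]
    by (simp add: sum4_cmult sum4_sym_terms)
  also have "sum4 I star_term \<le> c * (2 * (nu powr (\<theta> * (1/3)) * CV)) ^ 3"
  proof -
    have "sum4 I star_term \<le> c * (2 * suminf gap_root) ^ 3"
      using sum4_star_term_le[OF fin gr(1)] by (simp add: c_def)
    also have "\<dots> \<le> c * (2 * (nu powr (\<theta> * (1/3)) * CV)) ^ 3"
      using gr(2) suminf_nonneg[OF gr(1) gap_root_nonneg] c by (intro mult_left_mono power_mono) auto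
    finally show ?thesis .
  qed
  also have "sum4 I pair_term \<le> (c * (2 * (nu powr \<theta> * CD)))\<^sup>2"
  proof -
    have "sum4 I pair_term \<le> (c * (2 * suminf gap_bound))\<^sup>2"
      using sum4_pair_term_le[OF fin gb(1)] by (simp add: c_def)
    also have "\<dots> \<le> (c * (2 * (nu powr \<theta> * CD)))\<^sup>2"
      using gb(2) suminf_nonneg[OF gb(1) gap_bound_nonneg] c by (intro power_mono mult_left_mono) auto
    finally show ?thesis .
  qed
  also have "256 * (4 * (c * (2 * (nu powr (\<theta> * (1/3)) * CV)) ^ 3) + 3 * (c * (2 * (nu powr \<theta> * CD)))\<^sup>2)
      = 256 * (32 * CV ^ 3 * (c * nu powr \<theta>) + 12 * CD\<^sup>2 * (c\<^sup>2 * nu powr (2 * \<theta>)))"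
    by (simp add: power_mult_distrib cube square[symmetric])
  also have "\<dots> \<le> moment_const K a \<theta> * (c * nu powr \<theta> + c\<^sup>2 * nu powr (2 * \<theta>))"
  proof -
    have "1 \<le> CV" unfolding CV_def using decay_const_ge_1[of \<theta> a "1/3"] \<theta>(3) by simp
    then have "0 \<le> 32 * CV ^ 3 * (c\<^sup>2 * nu powr (2 * \<theta>))" "0 \<le> 12 * CD\<^sup>2 * (c * nu powr \<theta>)"
      using c by simp_all
    then show ?thesis
      unfolding moment_const_def CV_def[symmetric] CD_def[symmetric] by (simp add: algebra_simps)
  qed
  finally show ?thesis by (simp add: c_def)
qed

end

section \<open>Sums with independent multipliers\<close>

locale multiplier_mixing = mixing_indicators M U A K a
  for M :: "'a measure" and U :: "int \<Rightarrow> 'a \<Rightarrow> 'b::topological_space" and A K a +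
  fixes Xi :: "int \<Rightarrow> 'a \<Rightarrow> real" and m4 :: real
  assumes Xi_meas: "\<And>i. Xi i \<in> borel_measurable M"
    and integrable_Xi4: "\<And>i. integrable M (\<lambda>\<omega>. (Xi i \<omega>) ^ 4)"
    and integral_Xi4: "\<And>i. (\<integral>\<omega>. (Xi i \<omega>) ^ 4 \<partial>M) = m4"
    and Xi_indep: "indep_set (gen_events M Xi UNIV) (gen_events M U UNIV)"
begin

definition "partial_sum I \<omega> = (\<Sum>i\<in>I. Xi i \<omega> * Y i \<omega>)"
definition "prodXi w x y z \<omega> = Xi w \<omega> * Xi x \<omega> * Xi y \<omega> * Xi z \<omega>"

lemma prodY_gen_measurable: "prodY L \<in> borel_measurable (gen_measure M U)"
proof -
  have "E i \<in> sets (gen_measure M U)" for i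
    unfolding sets_gen_measure by (rule E_in_gen_events) auto
  then have "Y i \<in> borel_measurable (gen_measure M U)" for i
    unfolding Y_def by measurable
  then show ?thesis by (induction L) (auto simp: prodY_def[abs_def] intro!: borel_measurable_times)
qed

lemma prodXi_measurable: "prodXi w x y z \<in> borel_measurable M"
  and prodXi_gen_measurable: "prodXi w x y z \<in> borel_measurable (gen_measure M Xi)"
  unfolding prodXi_def using Xi_meas measurable_gen_measure[of Xi]
  by (intro borel_measurable_times; auto)+

lemma prodXi_le_mean_power4: "\<bar>prodXi w x y z \<omega>\<bar> \<le> ((Xi w \<omega>)^4 + (Xi x \<omega>)^4 + (Xi y \<omega>)^4 + (Xi z \<omega>)^4) / 4"
  unfolding prodXi_def by (rule abs_mult4_le_mean_power4)

lemma integrable_prodXi: "integrable M (prodXi w x y z)"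
proof (rule Bochner_Integration.integrable_bound[OF _ prodXi_measurable])
  show "integrable M (\<lambda>\<omega>. ((Xi w \<omega>)^4 + (Xi x \<omega>)^4 + (Xi y \<omega>)^4 + (Xi z \<omega>)^4) / 4)"
    using integrable_Xi4 by auto
  show "AE \<omega> in M. norm (prodXi w x y z \<omega>)
      \<le> norm (((Xi w \<omega>)^4 + (Xi x \<omega>)^4 + (Xi y \<omega>)^4 + (Xi z \<omega>)^4) / 4)"
    using prodXi_le_mean_power4 by auto
qed

lemma abs_integral_prodXi_le: "\<bar>\<integral>\<omega>. prodXi w x y z \<omega> \<partial>M\<bar> \<le> m4"
proof -
  have "\<bar>\<integral>\<omega>. prodXi w x y z \<omega> \<partial>M\<bar>
      \<le> (\<integral>\<omega>. ((Xi w \<omega>)^4 + (Xi x \<omega>)^4 + (Xi y \<omega>)^4 + (Xi z \<omega>)^4) / 4 \<partial>M)"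
    using integrable_Xi4 integrable_prodXi prodXi_le_mean_power4
    by (intro integral_abs_bound[THEN order_trans] integral_mono) auto
  also have "\<dots> = m4" using integrable_Xi4 by (simp add: integral_Xi4)
  finally show ?thesis .
qed

lemma integral_partial_sum_power4_le:
  shows "integrable M (\<lambda>\<omega>. (partial_sum I \<omega>) ^ 4)"
    and "(\<integral>\<omega>. (partial_sum I \<omega>) ^ 4 \<partial>M) \<le> m4 * sum4 I moment4"
proof -
  have expand: "(partial_sum I \<omega>) ^ 4 = sum4 I (\<lambda>w x y z. prodXi w x y z \<omega> * prodY [w, x, y, z] \<omega>)" for \<omega>
    unfolding partial_sum_def power4_sum prodXi_def prodY_def by (simp add: mult_ac)
  note indep = indep_gen_events_integral_mult[OF Xi_indep prodXi_gen_measurable prodXi_measurable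
      integrable_prodXi prodY_gen_measurable prodY_measurable integrable_prodY]
  show "integrable M (\<lambda>\<omega>. (partial_sum I \<omega>) ^ 4)"
    unfolding expand sum4_def using indep(1) by auto
  have "(\<integral>\<omega>. (partial_sum I \<omega>) ^ 4 \<partial>M)
      = sum4 I (\<lambda>w x y z. (\<integral>\<omega>. prodXi w x y z \<omega> \<partial>M) * (\<integral>\<omega>. prodY [w, x, y, z] \<omega> \<partial>M))"
    unfolding expand sum4_def using indep by simp
  also have "\<dots> \<le> sum4 I (\<lambda>w x y z. m4 * moment4 w x y z)"
  proof (rule sum4_mono)
    fix w x y z
    have "(\<integral>\<omega>. prodXi w x y z \<omega> \<partial>M) * (\<integral>\<omega>. prodY [w, x, y, z] \<omega> \<partial>M)
        \<le> \<bar>\<integral>\<omega>. prodXi w x y z \<omega> \<partial>M\<bar> * moment4 w x y z"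
      unfolding moment4_def abs_mult[symmetric] by (rule abs_ge_self)
    also have "\<dots> \<le> m4 * moment4 w x y z"
      using abs_integral_prodXi_le by (rule mult_right_mono) (simp add: moment4_def)
    finally show "(\<integral>\<omega>. prodXi w x y z \<omega> \<partial>M) * (\<integral>\<omega>. prodY [w, x, y, z] \<omega> \<partial>M)
        \<le> m4 * moment4 w x y z" .
  qed
  finally show "(\<integral>\<omega>. (partial_sum I \<omega>) ^ 4 \<partial>M) \<le> m4 * sum4 I moment4"
    by (simp add: sum4_cmult)
qed

lemma m4_nonneg: "0 \<le> m4"
  using integral_Xi4[of 0] by (metis integral_nonneg_AE AE_I2 zero_le_power_eq_numeral even_numeral)

lemma partial_sum_fourth_moment_le:
  assumes "finite I" "0 < \<theta>" "\<theta> < 1" "(1 - \<theta>) * a > 3"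
  shows "(\<integral>\<omega>. (partial_sum I \<omega>) ^ 4 \<partial>M)
    \<le> m4 * moment_const K a \<theta> * (real (card I) * nu powr \<theta> + (real (card I))\<^sup>2 * nu powr (2 * \<theta>))"
  using integral_partial_sum_power4_le(2)[of I] mult_left_mono[OF sum4_moment4_le[OF assms] m4_nonneg]
  by (simp add: mult.assoc)

end

lemma multiplier_mixing_stationary:
  fixes U :: "int \<Rightarrow> 'a \<Rightarrow> 'b::topological_space" and Xi :: "int \<Rightarrow> 'a \<Rightarrow> real"
  assumes M: "prob_space M"
    and U_meas: "\<And>i. U i \<in> borel_measurable M" and U_stat: "strictly_stationary M U"
    and A: "A \<in> sets borel" and K: "0 \<le> K" and a: "0 < a"
    and mixing: "\<And>p r C D. r \<ge> 1 \<Longrightarrow> C \<in> gen_events M U {..p} \<Longrightarrow> D \<in> gen_events M U {p + int r..}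
        \<Longrightarrow> \<bar>measure M (C \<inter> D) - measure M C * measure M D\<bar> \<le> K * real r powr (- a)"
    and Xi_meas: "\<And>i. Xi i \<in> borel_measurable M" and Xi_stat: "strictly_stationary M Xi"
    and indep: "prob_space.indep_set M (gen_events M Xi UNIV) (gen_events M U UNIV)"
    and Xi4: "integrable M (\<lambda>\<omega>. (Xi 0 \<omega>) ^ 4)"
  shows "multiplier_mixing M U A K a Xi (\<integral>\<omega>. (Xi 0 \<omega>) ^ 4 \<partial>M)"
proof -
  have power4: "(\<lambda>x::real. x ^ 4) \<in> borel_measurable borel" by measurable
  have "mixing_indicators M U A K a"
  proof (intro mixing_indicators.intro mixing_indicators_axioms.intro M U_meas A K a mixing)
    show "measure M {\<omega>\<in>space M. U i \<omega> \<in> A} = measure M {\<omega>\<in>space M. U 1 \<omega> \<in> A}" for i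
      using stationary_measure_eq[OF U_stat U_meas A, of i] stationary_measure_eq[OF U_stat U_meas A, of 1]
      by simp
  qed
  moreover have "multiplier_mixing_axioms M U Xi (\<integral>\<omega>. (Xi 0 \<omega>) ^ 4 \<partial>M)"
  proof (intro multiplier_mixing_axioms.intro Xi_meas indep)
    show "integrable M (\<lambda>\<omega>. (Xi i \<omega>) ^ 4)" for i
      using stationary_integral_eq(1)[OF Xi_stat Xi_meas power4, of i] Xi4 by simp
    show "(\<integral>\<omega>. (Xi i \<omega>) ^ 4 \<partial>M) = (\<integral>\<omega>. (Xi 0 \<omega>) ^ 4 \<partial>M)" for i
      by (rule stationary_integral_eq(2)[OF Xi_stat Xi_meas power4])
  qed
  ultimately show ?thesis by (rule multiplier_mixing.intro)
qed

lemma lambda_n_nonneg: "s \<le> t \<Longrightarrow> 0 \<le> lambda_n n s t"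
  unfolding lambda_n_def by (auto intro!: divide_nonneg_nonneg floor_mono mult_left_mono)

lemma Btilde_fourth_moment_le:
  fixes U :: "int \<Rightarrow> 'a \<Rightarrow> real ^ 'd" and Xi :: "nat \<Rightarrow> int \<Rightarrow> 'a \<Rightarrow> real"
  assumes "multiplier_mixing M U A K a (Xi n) m4" and n: "n \<ge> 1" and st: "0 \<le> s" "s \<le> t"
    and \<theta>: "0 < \<theta>" "\<theta> < 1" "(1 - \<theta>) * a > 3"
  defines "\<nu> \<equiv> measure M {\<omega>\<in>space M. U 1 \<omega> \<in> A}"
  shows "integrable M (\<lambda>\<omega>. (Btilde M U Xi n s t A \<omega>) ^ 4)"
    and "(\<integral>\<omega>. (Btilde M U Xi n s t A \<omega>) ^ 4 \<partial>M)
      \<le> m4 * moment_const K a \<theta> * ((lambda_n n s t)\<^sup>2 * \<nu> powr (2 * \<theta>) + lambda_n n s t * \<nu> powr \<theta> / real n)"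
proof -
  interpret multiplier_mixing M U A K a "Xi n" m4 by fact
  define I where "I = {\<lfloor>real n * s\<rfloor><..\<lfloor>real n * t\<rfloor>}"
  have \<nu>: "\<nu> = nu" by (simp add: \<nu>_def nu_def E_def)
  have Btilde: "(Btilde M U Xi n s t A \<omega>) ^ 4 = (partial_sum I \<omega>) ^ 4 / (real n)\<^sup>2"
    if "\<omega> \<in> space M" for \<omega>
  proof -
    have "Btilde M U Xi n s t A \<omega> = partial_sum I \<omega> / sqrt (real n)"
      unfolding Btilde_def partial_sum_def Y_def I_def \<nu>_def[symmetric] \<nu>
      using that by (intro arg_cong2[where f="(/)"] sum.cong) (auto simp: E_def indicator_def)
    moreover have "sqrt (real n) ^ 4 = (real n)\<^sup>2"
      using power_mult[of "sqrt (real n)" 2 2] by simp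
    ultimately show ?thesis by (simp add: power_divide)
  qed
  have "\<lfloor>real n * s\<rfloor> \<le> \<lfloor>real n * t\<rfloor>" using st by (intro floor_mono mult_left_mono) auto
  then have card: "real (card I) = real n * lambda_n n s t"
    using n by (simp add: I_def lambda_n_def)
  show "integrable M (\<lambda>\<omega>. (Btilde M U Xi n s t A \<omega>) ^ 4)"
    using integral_partial_sum_power4_le(1)[of I] by (simp add: Bochner_Integration.integrable_cong[OF refl Btilde])
  have "(\<integral>\<omega>. (Btilde M U Xi n s t A \<omega>) ^ 4 \<partial>M) = (\<integral>\<omega>. (partial_sum I \<omega>) ^ 4 \<partial>M) / (real n)\<^sup>2"
    by (simp add: Bochner_Integration.integral_cong[OF refl Btilde])
  also have "\<dots> \<le> m4 * moment_const K a \<theta>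
      * (real (card I) * nu powr \<theta> + (real (card I))\<^sup>2 * nu powr (2 * \<theta>)) / (real n)\<^sup>2"
    using partial_sum_fourth_moment_le[OF _ \<theta>, of I] by (intro divide_right_mono) (simp_all add: I_def)
  also have "\<dots> = m4 * moment_const K a \<theta>
      * ((lambda_n n s t)\<^sup>2 * \<nu> powr (2 * \<theta>) + lambda_n n s t * \<nu> powr \<theta> / real n)"
    using n unfolding card \<nu> by (simp add: field_simps power2_eq_square)
  finally show "(\<integral>\<omega>. (Btilde M U Xi n s t A \<omega>) ^ 4 \<partial>M)
      \<le> m4 * moment_const K a \<theta> * ((lambda_n n s t)\<^sup>2 * \<nu> powr (2 * \<theta>) + lambda_n n s t * \<nu> powr \<theta> / real n)" .
qed

lemma interpolation_exponent:
  fixes a q :: real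
  assumes "a > 3" "2 * a / (a - 3) < q"
  shows "0 < 2 / q" "2 / q < 1" "(1 - 2 / q) * a > 3"
proof -
  have "2 < 2 * a / (a - 3)" using assms(1) by (simp add: less_divide_eq)
  then have q: "2 < q" using assms(2) by linarith
  then show "0 < 2 / q" "2 / q < 1" by auto
  have "2 * a < q * (a - 3)" using assms by (simp add: divide_less_eq)
  then show "(1 - 2 / q) * a > 3" using q by (simp add: field_simps)
qed

theorem lemmaA2:
  fixes M :: "'a measure"
    and U :: "int \<Rightarrow> 'a \<Rightarrow> real ^ 'd"
    and Xi :: "nat \<Rightarrow> int \<Rightarrow> 'a \<Rightarrow> real"
    and a q :: real
  assumes "prob_space M"
    and U_meas: "\<And>i. U i \<in> borel_measurable M"
    and U_stat: "strictly_stationary M U"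
    and U_copula: "\<And>j x. 0 \<le> x \<Longrightarrow> x \<le> 1 \<Longrightarrow> measure M {\<omega>\<in>space M. U 0 \<omega> $ j \<le> x} = x"
    and a_gt: "a > 6"
    and mixing: "\<exists>K. \<forall>r\<ge>1. mixing_coeff M U r \<le> K * real r powr (- a)"
    and Xi_meas: "\<And>n i. Xi n i \<in> borel_measurable M"
    and Xi_stat: "\<And>n. strictly_stationary M (Xi n)"
    and Xi_indep: "\<And>n. prob_space.indep_set M (gen_events M (Xi n) UNIV) (gen_events M U UNIV)"
    and Xi_int: "\<And>n. integrable M (Xi n 0)"
    and Xi_mean: "\<And>n. (\<integral>\<omega>. Xi n 0 \<omega> \<partial>M) = 0"
    and Xi_var: "\<And>n. (\<integral>\<omega>. (Xi n 0 \<omega>)\<^sup>2 \<partial>M) > 0"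
    and Xi_moments: "\<And>\<nu>. \<nu> \<ge> 1 \<Longrightarrow> \<exists>B. \<forall>n\<ge>1.
        integrable M (\<lambda>\<omega>. \<bar>Xi n 0 \<omega>\<bar> powr \<nu>) \<and> (\<integral>\<omega>. \<bar>Xi n 0 \<omega>\<bar> powr \<nu> \<partial>M) \<le> B"
    and q_gt: "2 * a / (a - 3) < q" and q_lt: "q < 4"
  shows "\<exists>\<kappa>>0. \<forall>n\<ge>1. \<forall>s t u v.
     0 \<le> s \<longrightarrow> s \<le> t \<longrightarrow> t \<le> 1 \<longrightarrow> (\<forall>j. 0 \<le> u $ j \<and> u $ j \<le> v $ j \<and> v $ j \<le> 1) \<longrightarrow>
       (let A = box_oc u v; \<nu>A = measure M {\<omega>\<in>space M. U 1 \<omega> \<in> A} in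
        integrable M (\<lambda>\<omega>. (Btilde M U Xi n s t A \<omega>) ^ 4) \<and>
        (\<integral>\<omega>. (Btilde M U Xi n s t A \<omega>) ^ 4 \<partial>M)
          \<le> \<kappa> * ((lambda_n n s t)\<^sup>2 * \<nu>A powr (4 / q) + lambda_n n s t * \<nu>A powr (2 / q) / real n))"
proof -
  interpret prob_space M by fact
  obtain K where K: "0 \<le> K" and mixK: "\<And>p r C D. r \<ge> 1 \<Longrightarrow> C \<in> gen_events M U {..p}
      \<Longrightarrow> D \<in> gen_events M U {p + int r..} \<Longrightarrow> \<bar>prob (C \<inter> D) - prob C * prob D\<bar> \<le> K * real r powr (- a)"
    using mixing_events_bound[OF mixing] by blast
  obtain B where B: "\<And>n. n \<ge> 1 \<Longrightarrow> integrable M (\<lambda>\<omega>. (Xi n 0 \<omega>) ^ 4) \<and> (\<integral>\<omega>. (Xi n 0 \<omega>) ^ 4 \<partial>M) \<le> B"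
    using Xi_moments[of 4] by auto
  have \<theta>: "0 < 2 / q" "2 / q < 1" "(1 - 2 / q) * a > 3"
    using interpolation_exponent[of a q] a_gt q_gt by auto
  define \<kappa> where "\<kappa> = max B 1 * moment_const K a (2 / q)"
  have "0 < moment_const K a (2 / q)" using \<theta> by (intro moment_const_pos) auto
  then have \<kappa>: "0 < \<kappa>" "\<And>m4. m4 \<le> B \<Longrightarrow> m4 * moment_const K a (2 / q) \<le> \<kappa>"
    by (auto simp: \<kappa>_def intro: mult_right_mono)
  show ?thesis
  proof (intro exI[of _ \<kappa>] conjI allI impI \<kappa>(1))
    fix n :: nat and s t :: real and u v :: "real ^ 'd"
    assume n: "1 \<le> n" and s: "0 \<le> s" "s \<le> t"
    have "multiplier_mixing M U (box_oc u v) K a (Xi n) (\<integral>\<omega>. (Xi n 0 \<omega>) ^ 4 \<partial>M)"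
      by (rule multiplier_mixing_stationary[OF assms(1) U_meas U_stat box_oc_borel K _ mixK
            Xi_meas Xi_stat Xi_indep]) (use a_gt B[OF n] in auto)
    note bound = Btilde_fourth_moment_le[where Xi = Xi and n = n, OF this n s \<theta>(1-3)]
    define \<nu> where "\<nu> = measure M {\<omega>\<in>space M. U 1 \<omega> \<in> box_oc u v}"
    define X where "X = (lambda_n n s t)\<^sup>2 * \<nu> powr (4 / q) + lambda_n n s t * \<nu> powr (2 / q) / real n"
    have "0 \<le> X" using lambda_n_nonneg[OF s(2)] by (simp add: X_def)
    have "(\<integral>\<omega>. (Btilde M U Xi n s t (box_oc u v) \<omega>) ^ 4 \<partial>M) \<le> (\<integral>\<omega>. (Xi n 0 \<omega>) ^ 4 \<partial>M) * moment_const K a (2 / q) * X"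
      using bound(2) by (simp add: X_def \<nu>_def)
    also have "\<dots> \<le> \<kappa> * X"
      using \<kappa>(2)[OF conjunct2[OF B[OF n]]] \<open>0 \<le> X\<close> by (rule mult_right_mono)
    finally show "let A = box_oc u v; \<nu>A = measure M {\<omega>\<in>space M. U 1 \<omega> \<in> A} in
        integrable M (\<lambda>\<omega>. (Btilde M U Xi n s t A \<omega>) ^ 4) \<and>
        (\<integral>\<omega>. (Btilde M U Xi n s t A \<omega>) ^ 4 \<partial>M)
          \<le> \<kappa> * ((lambda_n n s t)\<^sup>2 * \<nu>A powr (4 / q) + lambda_n n s t * \<nu>A powr (2 / q) / real n)"
      using bound(1) by (simp add: Let_def X_def \<nu>_def)
  qed
qed

end
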